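(* Fix $M\ge1$, $L=\lfloor M/2\rfloor$ and complex constants $\alpha_1,\dots,\alpha_{L+1},\beta,\delta,\epsilon,\lambda_1,\dots,\lambda_M,\eta,\omega_1,\dots,\omega_L,\zeta$. Let $\mathcal A$ be a unital associative algebra over $\mathbb C$ with elements $b,b^\dagger$ and a unital algebra homomorphism $f\mapsto f(N)$ from the algebra of functions $\mathbb Z\to\mathbb C$ into $\mathcal A$ such that $f(N)b^\dagger=b^\dagger f(N+1)$ and $f(N)b=bf(N-1)$ for all $f$, and $b^\dagger b=\Phi(N)$, $bb^\dagger=\Phi(N+1)$ for some $\Phi:\mathbb Z\to\mathbb C$. For functions $A,h,\rho:\mathbb Z\to\mathbb C$ put $\Delta A(n)=A(n+1)-A(n)$ and $$\mathbf A=A(N),\quad \mathbf B=h(N)+b^\dagger\rho(N)+\rho(N)b,\quad \mathbf C=b^\dagger\Delta A(N)\rho(N)-\rho(N)\Delta A(N)b .$$ Then $[\mathbf A,\mathbf B]=\mathbf C$. If moreover for all $n\in\mathbb Z$: (q1) $(\Delta A(n))^2=\delta+\beta(A(n)+A(n+1))$; (q2) $\sum_{i=1}^{L+1}\alpha_iA(n)^i+\delta h(n)+\epsilon+2\beta A(n)h(n)=0$; (q3) $\Delta A(n)-\Delta A(n+1)=-\beta$; (q4) $\Delta A(n)(h(n+1)-h(n))=-\beta(h(n+1)+h(n))+\sum_{i=1}^{L}\omega_i(A(n+1)^i+A(n)^i)+\eta$; (q5) $2\Phi(n+1)\rho(n)^2\Delta A(n)-2\Phi(n)\rho(n-1)^2\Delta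 A(n-1)=\zeta+\sum_{i=1}^{M}\lambda_iA(n)^i-\beta h(n)^2-\beta(\rho(n-1)^2\Phi(n)+\rho(n)^2\Phi(n+1))+\eta h(n)+2\sum_{j=1}^{L}\omega_jA(n)^jh(n)$; then $[\mathbf A,\mathbf C]=\sum_{i=1}^{L+1}\alpha_i\mathbf A^i+\delta\mathbf B+\epsilon+\beta\{\mathbf A,\mathbf B\}$ and $[\mathbf B,\mathbf C]=\sum_{i=1}^{M}\lambda_i\mathbf A^i-\beta\mathbf B^2+\eta\mathbf B+\sum_{i=1}^{L}\omega_i\{\mathbf A^i,\mathbf B\}+\zeta$. Furthermore, (q1) and (q3) are satisfied by $A(n)=\sqrt\delta\,n+c_1$ when $\beta=0$ and by $A(n)=-\frac{\beta}{8}-\frac{\delta}{2\beta}+\frac{\beta}{2}(n+c_1)^2$ when $\beta\neq0$ (any constant $c_1$, any square root of $\delta$); and if $\delta+2\beta A(n)\ne0$ for all $n$, (q2) is satisfied by $h(n)=-\big(\sum_{i=1}^{L+1}\alpha_iA(n)^i+\epsilon\big)/(\delta+2\beta A(n))$, which for these $A$ equals $-4\big(\sum_{i=1}^{L+1}\alpha_iA(n)^i+\epsilon\big)/(4A'(n)^2-\beta^2)$, where $A'$ is the derivative of $A$ regarded as a polynomial in $n$.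
   Context: $[X,Y]=XY-YX$, $\{X,Y\}=XY+YX$; $f(N+1)$ denotes the image of $n\mapsto f(n+1)$. The function $h$ is the paper's function $b(N)$, renamed to avoid confusion with the element $b$. $\lfloor y\rfloor$ is the integer part. *)

theory Defs
  imports "HOL-Analysis.Analysis"
begin

class complex_algebra_1 = ring_1 +
  fixes cscale :: "complex \<Rightarrow> 'a \<Rightarrow> 'a"
  assumes cscale_add_right: "cscale a (x + y) = cscale a x + cscale a y"
    and cscale_add_left: "cscale (a + c) x = cscale a x + cscale c x"
    and cscale_cscale: "cscale a (cscale c x) = cscale (a * c) x"
    and cscale_one: "cscale 1 x = x"
    and mult_cscale_left: "cscale a x * y = cscale a (x * y)"
    and mult_cscale_right: "x * cscale a y = cscale a (x * y)"

text \<open>Unital algebra homomorphism from the algebra of functions Z -> C (pointwise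
operations) into the algebra; F f plays the role of f(N).\<close>
definition fun_alg_hom :: "((int \<Rightarrow> complex) \<Rightarrow> 'a::complex_algebra_1) \<Rightarrow> bool" where
  "fun_alg_hom F \<longleftrightarrow>
     (\<forall>f g. F (\<lambda>n. f n + g n) = F f + F g) \<and>
     (\<forall>c f. F (\<lambda>n. c * f n) = cscale c (F f)) \<and>
     (\<forall>f g. F (\<lambda>n. f n * g n) = F f * F g) \<and>
     F (\<lambda>n. 1) = 1"

definition commutator :: "'a::ring \<Rightarrow> 'a \<Rightarrow> 'a" where
  "commutator X Y = X * Y - Y * X"

definition anticommutator :: "'a::ring \<Rightarrow> 'a \<Rightarrow> 'a" where
  "anticommutator X Y = X * Y + Y * X"

definition fdiff :: "(int \<Rightarrow> complex) \<Rightarrow> int \<Rightarrow> complex" where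
  "fdiff A n = A (n + 1) - A n"

end

theory Submission
  imports Defs
begin

text \<open>
  Every operator occurring in the proposition is a finite combination
  \<open>a0(N) + b\<dagger> a1(N) + a2(N) b + b\<dagger>\<^sup>2 a3(N) + a4(N) b\<^sup>2\<close>, and the commutation rules of
  \<open>b, b\<dagger>\<close> with functions of \<open>N\<close> show that sums, scalar multiples and products of such
  normal forms are again normal forms whose coefficients are explicit expressions in
  the coefficient functions, suitably shifted.  Comparing coefficients
  turns the two relations into the scalar conditions (q1)--(q5).
\<close>

lemma cscale_zero_left: "cscale 0 (x::'a::complex_algebra_1) = 0"
proof -
  have "cscale (0 + 0) x = cscale 0 x + cscale 0 x" by (rule cscale_add_left)
  thus ?thesis by simp
qed

lemma cscale_minus_one: "cscale (-1) (x::'a::complex_algebra_1) = - x"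
proof -
  have "cscale (1 + -1) x = cscale 1 x + cscale (-1) x" by (rule cscale_add_left)
  thus ?thesis by (simp add: cscale_zero_left cscale_one eq_neg_iff_add_eq_0 add.commute)
qed

locale ladder_algebra =
  fixes F :: "(int \<Rightarrow> complex) \<Rightarrow> 'a::complex_algebra_1"
    and b bd :: 'a
    and \<Phi> :: "int \<Rightarrow> complex"
  assumes hom: "fun_alg_hom F"
    and comm_bd: "\<And>f. F f * bd = bd * F (\<lambda>n. f (n + 1))"
    and comm_b: "\<And>f. F f * b = b * F (\<lambda>n. f (n - 1))"
    and bdb: "bd * b = F \<Phi>"
    and bbd: "b * bd = F (\<lambda>n. \<Phi> (n + 1))"
begin

lemma F_add: "F (\<lambda>n. f n + g n) = F f + F g"
  and F_cscale: "F (\<lambda>n. c * f n) = cscale c (F f)"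
  and F_mult: "F (\<lambda>n. f n * g n) = F f * F g"
  and F_one: "F (\<lambda>n. 1) = 1"
  using hom by (simp_all add: fun_alg_hom_def)

lemma F_zero: "F (\<lambda>n. 0) = 0"
  using F_add[of "\<lambda>n. 0" "\<lambda>n. 0"] by simp

lemma F_uminus: "F (\<lambda>n. - f n) = - F f"
  using F_cscale[of "-1" f] by (simp add: cscale_minus_one)

lemma F_diff: "F (\<lambda>n. f n - g n) = F f - F g"
  using F_add[of f "\<lambda>n. - g n"] F_uminus[of g] by simp

lemma F_const: "cscale c 1 = F (\<lambda>n. c)"
  using F_cscale[of c "\<lambda>n. 1"] F_one by simp

lemma F_sum: "finite S \<Longrightarrow> (\<Sum>i\<in>S. F (g i)) = F (\<lambda>n. \<Sum>i\<in>S. g i n)"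
  by (induction S rule: finite_induct) (simp_all add: F_zero F_add)

lemma F_power: "F f ^ i = F (\<lambda>n. f n ^ i)"
  by (induction i) (simp_all add: F_one F_mult)

lemma bd_shift: "F f * (bd * X) = bd * (F (\<lambda>n. f (n + 1)) * X)"
  by (simp add: comm_bd flip: mult.assoc)

lemma b_shift: "b * F g = F (\<lambda>n. g (n + 1)) * b"
  using comm_b[of "\<lambda>n. g (n + 1)"] by simp

lemma b_shift': "b * (F g * X) = F (\<lambda>n. g (n + 1)) * (b * X)"
  by (simp add: b_shift flip: mult.assoc)

lemma bd_F_F_b: "bd * (F f * (F g * b)) = F (\<lambda>n. \<Phi> n * (f (n - 1) * g (n - 1)))"
proof -
  have "bd * (F (\<lambda>n. f n * g n) * b) = bd * b * F (\<lambda>n. f (n - 1) * g (n - 1))"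
    by (simp add: comm_b mult.assoc)
  then show ?thesis by (simp add: bdb F_mult mult.assoc)
qed

lemma b_bd: "b * (bd * X) = F (\<lambda>n. \<Phi> (n + 1)) * X"
  by (simp add: bbd flip: mult.assoc)

definition nf where
  "nf a0 a1 a2 a3 a4 = F a0 + bd * F a1 + F a2 * b + bd * (bd * F a3) + F a4 * (b * b)"

abbreviation first_order where
  "first_order h p q \<equiv> nf h p q (\<lambda>n. 0) (\<lambda>n. 0)"

lemma nf_add: "nf a0 a1 a2 a3 a4 + nf c0 c1 c2 c3 c4 =
  nf (\<lambda>n. a0 n + c0 n) (\<lambda>n. a1 n + c1 n) (\<lambda>n. a2 n + c2 n) (\<lambda>n. a3 n + c3 n) (\<lambda>n. a4 n + c4 n)"
  unfolding nf_def F_add by (simp add: distrib_left distrib_right add_ac)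

lemma nf_diff: "nf a0 a1 a2 a3 a4 - nf c0 c1 c2 c3 c4 =
  nf (\<lambda>n. a0 n - c0 n) (\<lambda>n. a1 n - c1 n) (\<lambda>n. a2 n - c2 n) (\<lambda>n. a3 n - c3 n) (\<lambda>n. a4 n - c4 n)"
  unfolding nf_def F_diff by (simp add: algebra_simps)

lemma nf_cscale: "cscale c (nf a0 a1 a2 a3 a4) =
  nf (\<lambda>n. c * a0 n) (\<lambda>n. c * a1 n) (\<lambda>n. c * a2 n) (\<lambda>n. c * a3 n) (\<lambda>n. c * a4 n)"
  unfolding nf_def F_cscale by (simp add: cscale_add_right mult_cscale_left mult_cscale_right)

lemma nf_F: "F f = first_order f (\<lambda>n. 0) (\<lambda>n. 0)"
  by (simp add: nf_def F_zero)

lemma nf_zero: "nf (\<lambda>n. 0) (\<lambda>n. 0) (\<lambda>n. 0) (\<lambda>n. 0) (\<lambda>n. 0) = 0"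
  by (simp add: nf_def F_zero)

lemma nf_sum: "finite S \<Longrightarrow> (\<Sum>i\<in>S. nf (a0 i) (a1 i) (a2 i) (a3 i) (a4 i)) =
  nf (\<lambda>n. \<Sum>i\<in>S. a0 i n) (\<lambda>n. \<Sum>i\<in>S. a1 i n) (\<lambda>n. \<Sum>i\<in>S. a2 i n) (\<lambda>n. \<Sum>i\<in>S. a3 i n) (\<lambda>n. \<Sum>i\<in>S. a4 i n)"
  by (induction S rule: finite_induct) (simp_all add: nf_add nf_zero)

text \<open>The product of two first order operators, in normal form.  This is the only
  multiplication rule needed: \<open>F A\<close>, \<open>B\<close> and \<open>C\<close> are all first order.\<close>

lemma first_order_mult:
  "first_order h p q * first_order h' p' q' =
   nf (\<lambda>n. h n * h' n + \<Phi> n * (p (n - 1) * q' (n - 1)) + q n * (\<Phi> (n + 1) * p' n))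
      (\<lambda>n. h (n + 1) * p' n + p n * h' n) (\<lambda>n. h n * q' n + q n * h' (n + 1))
      (\<lambda>n. p (n + 1) * p' n) (\<lambda>n. q n * q' (n + 1))"
proof -
  have first_order: "first_order x y z = F x + bd * F y + F z * b" for x y z
    by (simp add: nf_def F_zero)
  have "F h * (bd * F p') = bd * F (\<lambda>n. h (n + 1) * p' n)"
    and "F h * (F q' * b) = F (\<lambda>n. h n * q' n) * b"
    and "bd * F p * F h' = bd * F (\<lambda>n. p n * h' n)"
    and "bd * F p * (bd * F p') = bd * (bd * F (\<lambda>n. p (n + 1) * p' n))"
    and "bd * F p * (F q' * b) = F (\<lambda>n. \<Phi> n * (p (n - 1) * q' (n - 1)))"
    and "F q * b * F h' = F (\<lambda>n. q n * h' (n + 1)) * b"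
    and "F q * b * (bd * F p') = F (\<lambda>n. q n * (\<Phi> (n + 1) * p' n))"
    and "F q * b * (F q' * b) = F (\<lambda>n. q n * q' (n + 1)) * (b * b)"
    by (simp_all only: mult.assoc bd_shift b_shift b_shift' bd_F_F_b b_bd F_mult)
  then show ?thesis
    unfolding first_order nf_def distrib_left distrib_right F_add F_mult
    by (simp only: add_ac)
qed

text \<open>With \<open>a = A\<close> this is
  the first claim \<open>[A, B] = C\<close>.\<close>

lemma commutator_F_first_order:
  "commutator (F a) (first_order h p q) =
   first_order (\<lambda>n. 0) (\<lambda>n. fdiff a n * p n) (\<lambda>n. - (q n * fdiff a n))"
  unfolding nf_F[of a] commutator_def first_order_mult nf_diff
  by (simp add: fdiff_def algebra_simps)

lemma anticommutator_F_first_order: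
  "anticommutator (F a) (first_order h p q) =
   first_order (\<lambda>n. 2 * a n * h n) (\<lambda>n. (a (n + 1) + a n) * p n) (\<lambda>n. q n * (a n + a (n + 1)))"
  unfolding nf_F[of a] anticommutator_def first_order_mult nf_add
  by (simp add: algebra_simps)

text \<open>The relation for \<open>[A, C]\<close>: both sides are first order with ladder coefficients
  \<open>(\<Delta>A)\<^sup>2\<rho>\<close> resp. \<open>(\<delta> + \<beta>(A(n) + A(n+1)))\<rho>\<close> (equal by (q1)) and diagonal parts
  \<open>0\<close> resp. the left-hand side of (q2).\<close>

lemma commutator_A_C:
  fixes A h \<rho> :: "int \<Rightarrow> complex" and K :: nat
  assumes q1: "\<forall>n. (fdiff A n)\<^sup>2 = \<delta> + \<beta> * (A n + A (n + 1))"
    and q2: "\<forall>n. (\<Sum>i=1..K. \<alpha> i * A n ^ i) + \<delta> * h n + \<epsilon> + 2 * \<beta> * A n * h n = 0"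
  shows "commutator (F A) (first_order (\<lambda>n. 0) (\<lambda>n. fdiff A n * \<rho> n) (\<lambda>n. - (\<rho> n * fdiff A n)))
    = (\<Sum>i=1..K. cscale (\<alpha> i) (F A ^ i)) + cscale \<delta> (first_order h \<rho> \<rho>) + cscale \<epsilon> 1
      + cscale \<beta> (anticommutator (F A) (first_order h \<rho> \<rho>))"
proof -
  have lhs: "commutator (F A) (first_order (\<lambda>n. 0) (\<lambda>n. fdiff A n * \<rho> n) (\<lambda>n. - (\<rho> n * fdiff A n)))
     = first_order (\<lambda>n. 0) (\<lambda>n. (fdiff A n)\<^sup>2 * \<rho> n) (\<lambda>n. \<rho> n * (fdiff A n)\<^sup>2)"
    by (simp add: commutator_F_first_order power2_eq_square mult_ac)
  have rhs: "(\<Sum>i=1..K. cscale (\<alpha> i) (F A ^ i)) + cscale \<delta> (first_order h \<rho> \<rho>) + cscale \<epsilon> 1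
      + cscale \<beta> (anticommutator (F A) (first_order h \<rho> \<rho>))
     = first_order (\<lambda>n. (\<Sum>i=1..K. \<alpha> i * A n ^ i) + \<delta> * h n + \<epsilon> + 2 * \<beta> * A n * h n)
         (\<lambda>n. (\<delta> + \<beta> * (A n + A (n + 1))) * \<rho> n) (\<lambda>n. \<rho> n * (\<delta> + \<beta> * (A n + A (n + 1))))"
    by (simp add: anticommutator_F_first_order F_power F_const nf_cscale nf_add
        F_sum flip: F_cscale) (simp add: nf_F nf_add algebra_simps)
  show ?thesis unfolding lhs rhs using q1 q2 by simp
qed

text \<open>The relation for \<open>[B, C]\<close>: comparing coefficients in ladder degree \<open>0\<close>, \<open>\<plusminus>1\<close> and
  \<open>\<plusminus>2\<close> gives exactly the conditions (q5), (q4) and (q3).\<close>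

lemma commutator_B_C:
  fixes A h \<rho> :: "int \<Rightarrow> complex" and M L :: nat
  assumes q3: "\<forall>n. fdiff A n - fdiff A (n + 1) = - \<beta>"
    and q4: "\<forall>n. fdiff A n * (h (n + 1) - h n) =
               - \<beta> * (h (n + 1) + h n) + (\<Sum>i=1..L. \<omega> i * (A (n + 1) ^ i + A n ^ i)) + \<eta>"
    and q5: "\<forall>n. 2 * \<Phi> (n + 1) * (\<rho> n)\<^sup>2 * fdiff A n - 2 * \<Phi> n * (\<rho> (n - 1))\<^sup>2 * fdiff A (n - 1) =
               \<zeta> + (\<Sum>i=1..M. lam i * A n ^ i) - \<beta> * (h n)\<^sup>2
               - \<beta> * ((\<rho> (n - 1))\<^sup>2 * \<Phi> n + (\<rho> n)\<^sup>2 * \<Phi> (n + 1))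
               + \<eta> * h n + 2 * (\<Sum>j=1..L. \<omega> j * A n ^ j) * h n"
  shows "commutator (first_order h \<rho> \<rho>) (first_order (\<lambda>n. 0) (\<lambda>n. fdiff A n * \<rho> n) (\<lambda>n. - (\<rho> n * fdiff A n)))
    = (\<Sum>i=1..M. cscale (lam i) (F A ^ i)) - cscale \<beta> (first_order h \<rho> \<rho> ^ 2)
      + cscale \<eta> (first_order h \<rho> \<rho>)
      + (\<Sum>i=1..L. cscale (\<omega> i) (anticommutator (F A ^ i) (first_order h \<rho> \<rho>))) + cscale \<zeta> 1"
proof -
  have lhs: "commutator (first_order h \<rho> \<rho>) (first_order (\<lambda>n. 0) (\<lambda>n. fdiff A n * \<rho> n) (\<lambda>n. - (\<rho> n * fdiff A n)))
     = nf (\<lambda>n. 2 * \<Phi> (n + 1) * (\<rho> n)\<^sup>2 * fdiff A n - 2 * \<Phi> n * (\<rho> (n - 1))\<^sup>2 * fdiff A (n - 1))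
          (\<lambda>n. \<rho> n * (fdiff A n * (h (n + 1) - h n))) (\<lambda>n. \<rho> n * (fdiff A n * (h (n + 1) - h n)))
          (\<lambda>n. \<rho> n * \<rho> (n + 1) * (fdiff A n - fdiff A (n + 1)))
          (\<lambda>n. \<rho> n * \<rho> (n + 1) * (fdiff A n - fdiff A (n + 1)))"
    unfolding commutator_def first_order_mult nf_diff
    by (simp add: power2_eq_square algebra_simps)
  have rhs: "(\<Sum>i=1..M. cscale (lam i) (F A ^ i)) - cscale \<beta> (first_order h \<rho> \<rho> ^ 2)
      + cscale \<eta> (first_order h \<rho> \<rho>)
      + (\<Sum>i=1..L. cscale (\<omega> i) (anticommutator (F A ^ i) (first_order h \<rho> \<rho>))) + cscale \<zeta> 1
     = nf (\<lambda>n. \<zeta> + (\<Sum>i=1..M. lam i * A n ^ i) - \<beta> * (h n)\<^sup>2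
               - \<beta> * ((\<rho> (n - 1))\<^sup>2 * \<Phi> n + (\<rho> n)\<^sup>2 * \<Phi> (n + 1))
               + \<eta> * h n + 2 * (\<Sum>j=1..L. \<omega> j * A n ^ j) * h n)
          (\<lambda>n. \<rho> n * (- \<beta> * (h (n + 1) + h n) + (\<Sum>i=1..L. \<omega> i * (A (n + 1) ^ i + A n ^ i)) + \<eta>))
          (\<lambda>n. \<rho> n * (- \<beta> * (h (n + 1) + h n) + (\<Sum>i=1..L. \<omega> i * (A (n + 1) ^ i + A n ^ i)) + \<eta>))
          (\<lambda>n. \<rho> n * \<rho> (n + 1) * - \<beta>) (\<lambda>n. \<rho> n * \<rho> (n + 1) * - \<beta>)"
    by (simp add: anticommutator_F_first_order F_power F_const nf_cscale nf_add nf_diff nf_sum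
        power2_eq_square first_order_mult F_sum flip: F_cscale)
      (simp add: nf_F nf_add algebra_simps sum_distrib_left sum_distrib_right sum.distrib)
  show ?thesis unfolding lhs rhs using q3 q4 q5 by simp
qed

end

lemma linear_profile:
  fixes A :: "int \<Rightarrow> complex"
  assumes "\<beta> = 0" "s\<^sup>2 = \<delta>" "\<forall>n. A n = s * of_int n + c1"
  shows "(fdiff A n)\<^sup>2 = \<delta> + \<beta> * (A n + A (n + 1))" and "fdiff A n - fdiff A (n + 1) = - \<beta>"
  using assms by (simp_all add: fdiff_def algebra_simps)

lemma quadratic_profile:
  fixes A :: "int \<Rightarrow> complex"
  assumes "\<beta> \<noteq> 0" "\<forall>n. A n = - \<beta> / 8 - \<delta> / (2 * \<beta>) + \<beta> / 2 * (of_int n + c1)\<^sup>2"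
  shows "(fdiff A n)\<^sup>2 = \<delta> + \<beta> * (A n + A (n + 1))" and "fdiff A n - fdiff A (n + 1) = - \<beta>"
proof -
  have A: "A n = - \<beta> / 8 - \<delta> / (2 * \<beta>) + \<beta> / 2 * (of_int n + c1)\<^sup>2" for n
    using assms(2) by blast
  show "(fdiff A n)\<^sup>2 = \<delta> + \<beta> * (A n + A (n + 1))" "fdiff A n - fdiff A (n + 1) = - \<beta>"
    using assms(1) by (simp_all add: fdiff_def A field_simps power2_eq_square)
qed

text \<open>Condition (q2) is linear in \<open>h\<close>, with coefficient \<open>\<delta> + 2\<beta>A(n)\<close>; solving it gives \<open>h\<close>.\<close>

lemma solution_of_q2:
  fixes A h :: "int \<Rightarrow> complex"
  assumes nonzero: "\<forall>n. \<delta> + 2 * \<beta> * A n \<noteq> 0"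
    and h: "\<forall>n. h n = - ((\<Sum>i=1..K. \<alpha> i * A n ^ i) + \<epsilon>) / (\<delta> + 2 * \<beta> * A n)"
  shows "(\<Sum>i=1..K. \<alpha> i * A n ^ i) + \<delta> * h n + \<epsilon> + 2 * \<beta> * A n * h n = 0"
proof -
  have "\<delta> * h n + 2 * \<beta> * A n * h n = (\<delta> + 2 * \<beta> * A n) * h n"
    by (simp add: algebra_simps)
  also have "\<dots> = - ((\<Sum>i=1..K. \<alpha> i * A n ^ i) + \<epsilon>)"
    using nonzero h by simp
  finally show ?thesis
    by (simp add: algebra_simps)
qed

text \<open>For both profiles, \<open>4 A'(n)\<^sup>2 - \<beta>\<^sup>2 = 4 (\<delta> + 2\<beta>A(n))\<close>, where \<open>A'\<close> is the derivative of
  the polynomial defining \<open>A\<close>; hence \<open>h\<close> can be written with this denominator.\<close>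

lemma rescaled_quotient:
  assumes "D = 4 * d"
  shows "- (x::complex) / d = - 4 * x / D"
  using assms by (cases "d = 0") (simp_all add: field_simps)

lemma deriv_linear_profile: "deriv (\<lambda>x::complex. s * x + c1) z = s"
  by (rule DERIV_imp_deriv) (auto intro!: derivative_eq_intros)

lemma deriv_quadratic_profile:
  "deriv (\<lambda>x::complex. - \<beta> / 8 - \<delta> / (2 * \<beta>) + \<beta> / 2 * (x + c1)\<^sup>2) z = \<beta> * (z + c1)"
  by (rule DERIV_imp_deriv) (auto intro!: derivative_eq_intros simp: field_simps)

lemma linear_profile_h:
  fixes A h :: "int \<Rightarrow> complex"
  assumes "\<beta> = 0" "s\<^sup>2 = \<delta>"
    and h: "\<forall>n. h n = - ((\<Sum>i=1..K. \<alpha> i * A n ^ i) + \<epsilon>) / (\<delta> + 2 * \<beta> * A n)"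
  shows "h n = - 4 * ((\<Sum>i=1..K. \<alpha> i * A n ^ i) + \<epsilon>)
                    / (4 * (deriv (\<lambda>x::complex. s * x + c1) (of_int n))\<^sup>2 - \<beta>\<^sup>2)"
proof -
  have "4 * (deriv (\<lambda>x::complex. s * x + c1) (of_int n))\<^sup>2 - \<beta>\<^sup>2 = 4 * (\<delta> + 2 * \<beta> * A n)"
    using assms(1,2) by (simp add: deriv_linear_profile)
  with h show ?thesis
    by (simp only: rescaled_quotient)
qed

lemma quadratic_profile_h:
  fixes A h :: "int \<Rightarrow> complex"
  assumes "\<beta> \<noteq> 0" "\<forall>n. A n = - \<beta> / 8 - \<delta> / (2 * \<beta>) + \<beta> / 2 * (of_int n + c1)\<^sup>2"
    and h: "\<forall>n. h n = - ((\<Sum>i=1..K. \<alpha> i * A n ^ i) + \<epsilon>) / (\<delta> + 2 * \<beta> * A n)"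
  shows "h n = - 4 * ((\<Sum>i=1..K. \<alpha> i * A n ^ i) + \<epsilon>)
      / (4 * (deriv (\<lambda>x::complex. - \<beta> / 8 - \<delta> / (2 * \<beta>) + \<beta> / 2 * (x + c1)\<^sup>2) (of_int n))\<^sup>2 - \<beta>\<^sup>2)"
proof -
  have "4 * (deriv (\<lambda>x::complex. - \<beta> / 8 - \<delta> / (2 * \<beta>) + \<beta> / 2 * (x + c1)\<^sup>2) (of_int n))\<^sup>2 - \<beta>\<^sup>2
      = 4 * (\<delta> + 2 * \<beta> * A n)"
  proof -
    have A: "A n = - \<beta> / 8 - \<delta> / (2 * \<beta>) + \<beta> / 2 * (of_int n + c1)\<^sup>2"
      using assms(2) by blast
    show ?thesis
      unfolding deriv_quadratic_profile A using assms(1) by (simp add: field_simps power2_eq_square)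
  qed
  with h show ?thesis
    by (simp only: rescaled_quotient)
qed

theorem proposition7:
  fixes M :: nat
    and \<alpha> lam \<omega> :: "nat \<Rightarrow> complex"
    and \<beta> \<delta> \<epsilon> \<eta> \<zeta> :: complex
    and F :: "(int \<Rightarrow> complex) \<Rightarrow> 'a::complex_algebra_1"
    and b bd :: 'a
    and \<Phi> A h \<rho> :: "int \<Rightarrow> complex"
  assumes M1: "M \<ge> 1"
    and hom: "fun_alg_hom F"
    and comm_bd: "\<And>f. F f * bd = bd * F (\<lambda>n. f (n + 1))"
    and comm_b: "\<And>f. F f * b = b * F (\<lambda>n. f (n - 1))"
    and bdb: "bd * b = F \<Phi>"
    and bbd: "b * bd = F (\<lambda>n. \<Phi> (n + 1))"
  defines "L \<equiv> M div 2"
    and "AA \<equiv> F A"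
    and "BB \<equiv> F h + bd * F \<rho> + F \<rho> * b"
    and "CC \<equiv> bd * F (fdiff A) * F \<rho> - F \<rho> * F (fdiff A) * b"
  shows "(commutator AA BB = CC)
     \<and> ((\<forall>n. (fdiff A n)\<^sup>2 = \<delta> + \<beta> * (A n + A (n + 1))) \<and>
         (\<forall>n. (\<Sum>i=1..L+1. \<alpha> i * A n ^ i) + \<delta> * h n + \<epsilon> + 2 * \<beta> * A n * h n = 0) \<and>
         (\<forall>n. fdiff A n - fdiff A (n + 1) = - \<beta>) \<and>
         (\<forall>n. fdiff A n * (h (n + 1) - h n) =
               - \<beta> * (h (n + 1) + h n) + (\<Sum>i=1..L. \<omega> i * (A (n + 1) ^ i + A n ^ i)) + \<eta>) \<and>
         (\<forall>n. 2 * \<Phi> (n + 1) * (\<rho> n)\<^sup>2 * fdiff A n - 2 * \<Phi> n * (\<rho> (n - 1))\<^sup>2 * fdiff A (n - 1) =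
               \<zeta> + (\<Sum>i=1..M. lam i * A n ^ i) - \<beta> * (h n)\<^sup>2
               - \<beta> * ((\<rho> (n - 1))\<^sup>2 * \<Phi> n + (\<rho> n)\<^sup>2 * \<Phi> (n + 1))
               + \<eta> * h n + 2 * (\<Sum>j=1..L. \<omega> j * A n ^ j) * h n)
         \<longrightarrow>
         commutator AA CC = (\<Sum>i=1..L+1. cscale (\<alpha> i) (AA ^ i)) + cscale \<delta> BB + cscale \<epsilon> 1
                               + cscale \<beta> (anticommutator AA BB) \<and>
         commutator BB CC = (\<Sum>i=1..M. cscale (lam i) (AA ^ i)) - cscale \<beta> (BB ^ 2) + cscale \<eta> BB
                               + (\<Sum>i=1..L. cscale (\<omega> i) (anticommutator (AA ^ i) BB)) + cscale \<zeta> 1)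
     \<and> (\<forall>(c1::complex) (s::complex) (A1::int \<Rightarrow> complex). \<beta> = 0 \<and> s\<^sup>2 = \<delta> \<and>
           (\<forall>n. A1 n = s * of_int n + c1) \<longrightarrow>
           (\<forall>n. (fdiff A1 n)\<^sup>2 = \<delta> + \<beta> * (A1 n + A1 (n + 1))) \<and>
           (\<forall>n. fdiff A1 n - fdiff A1 (n + 1) = - \<beta>))
     \<and> (\<forall>(c1::complex) (A1::int \<Rightarrow> complex). \<beta> \<noteq> 0 \<and>
           (\<forall>n. A1 n = - \<beta> / 8 - \<delta> / (2 * \<beta>) + \<beta> / 2 * (of_int n + c1)\<^sup>2) \<longrightarrow>
           (\<forall>n. (fdiff A1 n)\<^sup>2 = \<delta> + \<beta> * (A1 n + A1 (n + 1))) \<and>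
           (\<forall>n. fdiff A1 n - fdiff A1 (n + 1) = - \<beta>))
     \<and> (\<forall>(A1::int \<Rightarrow> complex) (h1::int \<Rightarrow> complex).
           (\<forall>n. \<delta> + 2 * \<beta> * A1 n \<noteq> 0) \<and>
           (\<forall>n. h1 n = - ((\<Sum>i=1..L+1. \<alpha> i * A1 n ^ i) + \<epsilon>) / (\<delta> + 2 * \<beta> * A1 n)) \<longrightarrow>
           (\<forall>n. (\<Sum>i=1..L+1. \<alpha> i * A1 n ^ i) + \<delta> * h1 n + \<epsilon> + 2 * \<beta> * A1 n * h1 n = 0))
     \<and> (\<forall>(c1::complex) (s::complex) (A1::int \<Rightarrow> complex) (h1::int \<Rightarrow> complex). \<beta> = 0 \<and> s\<^sup>2 = \<delta> \<and>
           (\<forall>n. A1 n = s * of_int n + c1) \<and>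
           (\<forall>n. \<delta> + 2 * \<beta> * A1 n \<noteq> 0) \<and>
           (\<forall>n. h1 n = - ((\<Sum>i=1..L+1. \<alpha> i * A1 n ^ i) + \<epsilon>) / (\<delta> + 2 * \<beta> * A1 n)) \<longrightarrow>
           (\<forall>n. h1 n = - 4 * ((\<Sum>i=1..L+1. \<alpha> i * A1 n ^ i) + \<epsilon>)
                        / (4 * (deriv (\<lambda>x::complex. s * x + c1) (of_int n :: complex))\<^sup>2 - \<beta>\<^sup>2)))
     \<and> (\<forall>(c1::complex) (A1::int \<Rightarrow> complex) (h1::int \<Rightarrow> complex). \<beta> \<noteq> 0 \<and>
           (\<forall>n. A1 n = - \<beta> / 8 - \<delta> / (2 * \<beta>) + \<beta> / 2 * (of_int n + c1)\<^sup>2) \<and>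
           (\<forall>n. \<delta> + 2 * \<beta> * A1 n \<noteq> 0) \<and>
           (\<forall>n. h1 n = - ((\<Sum>i=1..L+1. \<alpha> i * A1 n ^ i) + \<epsilon>) / (\<delta> + 2 * \<beta> * A1 n)) \<longrightarrow>
           (\<forall>n. h1 n = - 4 * ((\<Sum>i=1..L+1. \<alpha> i * A1 n ^ i) + \<epsilon>)
                        / (4 * (deriv (\<lambda>x::complex. - \<beta> / 8 - \<delta> / (2 * \<beta>) + \<beta> / 2 * (x + c1)\<^sup>2) (of_int n :: complex))\<^sup>2 - \<beta>\<^sup>2)))"
proof -
  interpret ladder_algebra F b bd \<Phi>
    using hom comm_bd comm_b bdb bbd by unfold_locales
  have B: "BB = first_order h \<rho> \<rho>"
    unfolding BB_def by (simp add: nf_def F_zero)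
  have C: "CC = first_order (\<lambda>n. 0) (\<lambda>n. fdiff A n * \<rho> n) (\<lambda>n. - (\<rho> n * fdiff A n))"
    unfolding CC_def nf_def by (simp add: F_zero F_uminus F_mult mult.assoc)
  show ?thesis
    unfolding AA_def B C
    by (intro conjI allI impI; (elim conjE)?;
        rule commutator_F_first_order commutator_A_C commutator_B_C linear_profile quadratic_profile
          solution_of_q2 linear_profile_h quadratic_profile_h;
        assumption)
qed

end
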